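(* Let $R$ be a semiring and let $\theta$ be a $k$-congruence on $R$. Then $R/\theta$ has a zero $0_\theta$, $0_\theta$ is an ideal of $R$, and $\kappa_{0_\theta}=\theta$.
   Context: A semiring $(R,+,\cdot)$ is a set with two binary operations such that $(R,+)$ is a commutative semigroup, $(R,\cdot)$ is a semigroup, and multiplication distributes over addition from both sides; no additive neutral element or identity is assumed. An element $0$ of a semiring $S$ is a zero of $S$ if $0+s=s$ and $0s=s0=0$ for all $s\in S$. An ideal of $R$ is a nonempty subset $A\subseteq R$ with $a+b\in A$ and $ra,ar\in A$ for all $a,b\in A$, $r\in R$. A congruence on $R$ is an equivalence relation $\equiv$ such that $a\equiv b$ implies $a+c\equiv b+c$, $ac\equiv bc$, $ca\equiv cb$ for all $a,b,c\in R$; $R/\theta$ denotes the quotient semiring of $\theta$-classes with $[x]+[y]=[x+y]$, $[x][y]=[xy]$; a zero of $R/\theta$ is a $\theta$-class, hence a subset of $R$. For an ideal $A$ of $R$, $\kappa_A$ is the congruence defined by $x\,\kappa_A\,y$ iff $x+a=y+b$ for some $a,b\in A$. A congruence $\theta$ is a $k$-congruence if $\theta=\kappa_A$ for some ideal $A$ of $R$. Throughout, $|R|\geq 2$. *)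

theory Defs
  imports Main
begin

text \<open>A semiring in the paper's sense (no zero, no identity) is the type class
  semiring: commutative additive semigroup, multiplicative semigroup, two-sided distributivity.\<close>

definition sr_ideal :: "'a::semiring set \<Rightarrow> bool" where
  "sr_ideal A \<longleftrightarrow> A \<noteq> {} \<and> (\<forall>a\<in>A. \<forall>b\<in>A. a + b \<in> A) \<and>
     (\<forall>a\<in>A. \<forall>r. r * a \<in> A \<and> a * r \<in> A)"

definition sr_congruence :: "('a::semiring) rel \<Rightarrow> bool" where
  "sr_congruence \<theta> \<longleftrightarrow> equiv UNIV \<theta> \<and>
     (\<forall>a b c. (a, b) \<in> \<theta> \<longrightarrow> (a + c, b + c) \<in> \<theta> \<and> (a * c, b * c) \<in> \<theta> \<and> (c * a, c * b) \<in> \<theta>)"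

definition kappa :: "'a::semiring set \<Rightarrow> 'a rel" where
  "kappa A = {(x, y). \<exists>a\<in>A. \<exists>b\<in>A. x + a = y + b}"

definition k_congruence :: "('a::semiring) rel \<Rightarrow> bool" where
  "k_congruence \<theta> \<longleftrightarrow> (\<exists>A. sr_ideal A \<and> \<theta> = kappa A)"

text \<open>Z is a zero of the quotient semiring R/theta: Z is a theta-class, and for every
  class [s] we have Z + [s] = [s], Z [s] = Z, [s] Z = Z, where the quotient operations
  are computed on representatives ([x]+[y] = [x+y], [x][y] = [xy]).\<close>

definition quot_zero :: "('a::semiring) rel \<Rightarrow> 'a set \<Rightarrow> bool" where
  "quot_zero \<theta> Z \<longleftrightarrow> Z \<in> UNIV // \<theta> \<and>
     (\<forall>z\<in>Z. \<forall>s. \<theta> `` {z + s} = \<theta> `` {s} \<and> \<theta> `` {z * s} = Z \<and> \<theta> `` {s * z} = Z)"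

end

theory Submission
  imports Defs
begin

text \<open>Write \<theta> = kappa A and pick a \<in> A. Modulo kappa A the element a absorbs products
  (a s and s a lie in A) and is neutral for addition (s + a + a = s + (a + a)), so its class
  Z is a zero of R/\<theta>. Any zero class of a congruence is an ideal Z with kappa Z \<subseteq> \<theta>, and
  A \<subseteq> Z gives \<theta> = kappa A \<subseteq> kappa Z.\<close>

lemma sr_congruence_equiv: "sr_congruence \<theta> \<Longrightarrow> equiv UNIV \<theta>"
  unfolding sr_congruence_def by blast

lemma sr_congruence_sym: "sr_congruence \<theta> \<Longrightarrow> (x, y) \<in> \<theta> \<Longrightarrow> (y, x) \<in> \<theta>"
  by (drule sr_congruence_equiv) (erule equivE, erule symD)

lemma sr_congruence_trans:
  "sr_congruence \<theta> \<Longrightarrow> (x, y) \<in> \<theta> \<Longrightarrow> (y, z) \<in> \<theta> \<Longrightarrow> (x, z) \<in> \<theta>"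
  by (drule sr_congruence_equiv) (erule equivE, erule transD)

lemma sr_congruenceD:
  assumes "sr_congruence \<theta>" and "(a, b) \<in> \<theta>"
  shows "(a + c, b + c) \<in> \<theta>" and "(a * c, b * c) \<in> \<theta>" and "(c * a, c * b) \<in> \<theta>"
  using assms unfolding sr_congruence_def by blast+

lemma sr_congruence_class_self: "sr_congruence \<theta> \<Longrightarrow> x \<in> \<theta> `` {x}"
  by (drule sr_congruence_equiv) (erule equiv_class_self, simp)

lemma sr_congruence_class_eq: "sr_congruence \<theta> \<Longrightarrow> (x, y) \<in> \<theta> \<Longrightarrow> \<theta> `` {x} = \<theta> `` {y}"
  by (drule sr_congruence_equiv) (erule equiv_class_eq)

lemma quot_zero_classI:
  assumes cong: "sr_congruence \<theta>"
    and add: "\<And>s. (a + s, s) \<in> \<theta>"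
    and mult_right: "\<And>s. (a * s, a) \<in> \<theta>"
    and mult_left: "\<And>s. (s * a, a) \<in> \<theta>"
  shows "quot_zero \<theta> (\<theta> `` {a})"
  unfolding quot_zero_def
proof (intro conjI ballI allI)
  show "\<theta> `` {a} \<in> UNIV // \<theta>" by (simp add: quotientI)
  fix z s assume "z \<in> \<theta> `` {a}"
  then have za: "(z, a) \<in> \<theta>" using sr_congruence_sym[OF cong] by blast
  have "(z + s, s) \<in> \<theta>"
    using sr_congruenceD(1)[OF cong za] add cong by (rule sr_congruence_trans[rotated])
  then show "\<theta> `` {z + s} = \<theta> `` {s}" by (rule sr_congruence_class_eq[OF cong])
  have "(z * s, a) \<in> \<theta>"
    using sr_congruenceD(2)[OF cong za] mult_right cong by (rule sr_congruence_trans[rotated])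
  then show "\<theta> `` {z * s} = \<theta> `` {a}" by (rule sr_congruence_class_eq[OF cong])
  have "(s * z, a) \<in> \<theta>"
    using sr_congruenceD(3)[OF cong za] mult_left cong by (rule sr_congruence_trans[rotated])
  then show "\<theta> `` {s * z} = \<theta> `` {a}" by (rule sr_congruence_class_eq[OF cong])
qed

lemma quot_zero_class_eq:
  assumes cong: "sr_congruence \<theta>" and zero: "quot_zero \<theta> Z" and z: "z \<in> Z"
  shows "\<theta> `` {z} = Z"
proof -
  obtain x where Z: "Z = \<theta> `` {x}"
    using zero unfolding quot_zero_def by (auto elim: quotientE)
  then have "(x, z) \<in> \<theta>" using z by simp
  then have "\<theta> `` {x} = \<theta> `` {z}" by (rule sr_congruence_class_eq[OF cong])
  with Z show ?thesis by simp
qed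

lemma quot_zero_sr_ideal:
  assumes cong: "sr_congruence \<theta>" and zero: "quot_zero \<theta> Z"
  shows "sr_ideal Z"
  unfolding sr_ideal_def
proof (intro conjI ballI allI)
  have "Z \<in> UNIV // \<theta>" using zero unfolding quot_zero_def by (rule conjunct1)
  with sr_congruence_equiv[OF cong] show "Z \<noteq> {}" by (rule in_quotient_imp_non_empty)
  fix a assume a: "a \<in> Z"
  show "a + b \<in> Z" if b: "b \<in> Z" for b
  proof -
    have "a + b \<in> \<theta> `` {a + b}" by (rule sr_congruence_class_self[OF cong])
    also have "\<theta> `` {a + b} = \<theta> `` {b}" using zero a unfolding quot_zero_def by blast
    also have "\<dots> = Z" using cong zero b by (rule quot_zero_class_eq)
    finally show ?thesis .
  qed
  fix r
  have "r * a \<in> \<theta> `` {r * a}" and "a * r \<in> \<theta> `` {a * r}"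
    by (rule sr_congruence_class_self[OF cong])+
  moreover have "\<theta> `` {r * a} = Z" and "\<theta> `` {a * r} = Z"
    using zero a unfolding quot_zero_def by blast+
  ultimately show "r * a \<in> Z" and "a * r \<in> Z" by simp_all
qed

lemma kappa_quot_zero_subset:
  assumes cong: "sr_congruence \<theta>" and zero: "quot_zero \<theta> Z"
  shows "kappa Z \<subseteq> \<theta>"
proof safe
  have absorb: "(x + z, x) \<in> \<theta>" if "z \<in> Z" for x z
  proof -
    have "\<theta> `` {z + x} = \<theta> `` {x}" using zero that unfolding quot_zero_def by blast
    then have "x + z \<in> \<theta> `` {x}"
      using sr_congruence_class_self[OF cong, of "z + x"] by (simp add: add.commute)
    then show ?thesis using sr_congruence_sym[OF cong] by blast
  qed
  fix x y assume "(x, y) \<in> kappa Z"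
  then obtain z z' where "z \<in> Z" "z' \<in> Z" "x + z = y + z'"
    unfolding kappa_def by blast
  then have "(x, x + z) \<in> \<theta>" and "(x + z, y) \<in> \<theta>"
    using absorb[of z x] absorb[of z' y] sr_congruence_sym[OF cong] by simp_all
  then show "(x, y) \<in> \<theta>" by (rule sr_congruence_trans[OF cong])
qed

lemma kappa_mono: "A \<subseteq> B \<Longrightarrow> kappa A \<subseteq> kappa B"
  unfolding kappa_def by blast

lemma kappa_ideal_elements: "a \<in> A \<Longrightarrow> b \<in> A \<Longrightarrow> (a, b) \<in> kappa A"
  unfolding kappa_def by (blast intro: add.commute)

lemma kappa_add_ideal_element:
  assumes "sr_ideal A" and "a \<in> A"
  shows "(x + a, x) \<in> kappa A"
proof -
  have "a + a \<in> A" using assms unfolding sr_ideal_def by blast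
  moreover have "(x + a) + a = x + (a + a)" by (rule add.assoc)
  ultimately show ?thesis using assms(2) unfolding kappa_def by blast
qed

theorem lemma3p6:
  fixes \<theta> :: "('a::semiring) rel"
  assumes "\<exists>x y :: 'a. x \<noteq> y"
    and "sr_congruence \<theta>"
    and "k_congruence \<theta>"
  shows "\<exists>Z. quot_zero \<theta> Z \<and> sr_ideal Z \<and> kappa Z = \<theta>"
proof -
  obtain A where A: "sr_ideal A" and \<theta>: "\<theta> = kappa A"
    using assms(3) unfolding k_congruence_def by blast
  obtain a where a: "a \<in> A" using A unfolding sr_ideal_def by blast
  have neutral: "(a + s, s) \<in> \<theta>" for s
    using kappa_add_ideal_element[OF A a, of s] by (simp add: \<theta> add.commute)
  have absorbing: "(a * s, a) \<in> \<theta>" "(s * a, a) \<in> \<theta>" for s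
    using A a unfolding \<theta> sr_ideal_def by (blast intro: kappa_ideal_elements)+
  let ?Z = "\<theta> `` {a}"
  have zero: "quot_zero \<theta> ?Z"
    by (rule quot_zero_classI[OF assms(2) neutral absorbing])
  have "A \<subseteq> ?Z" using a \<theta> kappa_ideal_elements by blast
  then have "\<theta> \<subseteq> kappa ?Z" unfolding \<theta> by (rule kappa_mono)
  with kappa_quot_zero_subset[OF assms(2) zero] quot_zero_sr_ideal[OF assms(2) zero] zero
  show ?thesis by blast
qed

end
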